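(* Let $\mu\in(0,1)$ and $\alpha>0$. Then there exists $K>0$ such that for all $\tau\ge0$, $$\int_0^1\int_0^\tau\mu\frac{e^{(\mu-\alpha)\tau'}}{(e^{-\tau'}+b)^{\mu+\alpha}(1-b)^{1-\mu}}\,d\tau'\,db\le\begin{cases}K\int_0^\tau e^{(\mu-\alpha)\tau'}d\tau',&\alpha<1-\mu,\\ K\int_0^\tau e^{(2\mu-1)\tau'}d\tau',&\alpha>1-\mu,\\ K\int_0^\tau(1+\tau')e^{(2\mu-1)\tau'}d\tau',&\alpha=1-\mu.\end{cases}$$ *)

theory Defs
  imports "HOL-Analysis.Analysis"
begin

end

theory Submission
  imports Defs
begin

text \<open>Split the b-range at 1/2: on [0,1/2] the factor (1-b)^(\<mu>-1) is at most 2^(1-\<mu>), on [1/2,1]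
  the factor (e^-t+b)^-(\<mu>+\<alpha>) is at most 2^(\<mu>+\<alpha>). Hence the kernel is dominated by
  2^(1-\<mu>) (e^-t+b)^-(\<mu>+\<alpha>) + 2^(\<mu>+\<alpha>) (1-b)^(\<mu>-1). The second summand integrates over b
  to 1/\<mu>; the first is explicitly integrable and gives a bound that is constant, of order
  e^((\<mu>+\<alpha>-1)t), or of order 1+t according as \<mu>+\<alpha> < 1, > 1 or = 1. Swapping the two
  integrals (Tonelli) and integrating these bounds against e^((\<mu>-\<alpha>)t) over [0,\<tau>] gives the
  three cases.\<close>

lemma has_integral_shifted_powr:
  fixes x s :: real
  assumes "0 < x" "s \<noteq> 1"
  shows "((\<lambda>b. (x + b) powr (- s)) has_integral
           ((x + 1) powr (1 - s) - x powr (1 - s)) / (1 - s)) {0..1}"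
proof -
  have "((\<lambda>b. (x + b) powr (1 - s) / (1 - s)) has_real_derivative (x + b) powr (- s))
          (at b within {0..1})" if "b \<in> {0..1}" for b
  proof -
    have "((\<lambda>b. (x + b) powr (1 - s) / (1 - s)) has_real_derivative
            (1 - s) * (x + b) powr (1 - s - 1) * 1 / (1 - s)) (at b)"
      using that assms by (auto intro!: derivative_eq_intros)
    then show ?thesis
      using assms(2) by (simp add: has_field_derivative_at_within)
  qed
  from fundamental_theorem_of_calculus[OF _ this[unfolded has_real_derivative_iff_has_vector_derivative]]
  show ?thesis by (simp add: diff_divide_distrib)
qed

lemma has_integral_shifted_inverse:
  fixes x :: real
  assumes "0 < x"
  shows "((\<lambda>b. (x + b) powr (- 1)) has_integral ln (x + 1) - ln x) {0..1}"
proof -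
  have "((\<lambda>b. ln (x + b)) has_real_derivative (x + b) powr (- 1)) (at b within {0..1})"
    if "b \<in> {0..1}" for b
  proof -
    have "((\<lambda>b. ln (x + b)) has_real_derivative 1 / (x + b)) (at b)"
      using that assms by (auto intro!: derivative_eq_intros)
    then show ?thesis
      using that assms by (simp add: powr_minus_divide has_field_derivative_at_within)
  qed
  from fundamental_theorem_of_calculus[OF _ this[unfolded has_real_derivative_iff_has_vector_derivative]]
  show ?thesis by simp
qed

lemma has_integral_one_minus_powr:
  fixes m :: real
  assumes "0 < m"
  shows "((\<lambda>b. (1 - b) powr (m - 1)) has_integral 1 / m) {0..1}"
proof -
  have "((\<lambda>x. x powr (m - 1)) has_integral 1 / m) {0..1}"
    using has_integral_powr_from_0[of "m - 1" 1] assms by simp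
  then have "((\<lambda>x. (1 + x) powr (m - 1)) has_integral 1 / m) {-1..0}"
    using has_integral_shift_Icc_real[of "\<lambda>x. x powr (m - 1)" 1 "1 / m" "-1" 0] by (simp add: o_def)
  then have "((\<lambda>x. (1 + - x) powr (m - 1)) has_integral 1 / m) {- 0..- (- 1)}"
    by (subst has_integral_reflect_real)
  then show ?thesis by simp
qed

lemma nn_integral_shifted_powr_le_subcritical:
  fixes x s :: real
  assumes "0 < s" "s < 1" "0 < x" "x \<le> 1"
  shows "(\<integral>\<^sup>+ b\<in>{0..1}. ennreal ((x + b) powr (- s)) \<partial>lborel) \<le> ennreal (2 powr (1 - s) / (1 - s))"
proof -
  have "(\<integral>\<^sup>+ b\<in>{0..1}. ennreal ((x + b) powr (- s)) \<partial>lborel)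
          = ennreal (((x + 1) powr (1 - s) - x powr (1 - s)) / (1 - s))"
    using has_integral_shifted_powr[of x s] assms by (intro nn_integral_has_integral_lebesgue') auto
  also have "\<dots> \<le> ennreal (2 powr (1 - s) / (1 - s))"
  proof (intro ennreal_leI divide_right_mono)
    have "(x + 1) powr (1 - s) \<le> 2 powr (1 - s)"
      using assms by (intro powr_mono2) auto
    then show "(x + 1) powr (1 - s) - x powr (1 - s) \<le> 2 powr (1 - s)"
      using powr_ge_zero[of x "1 - s"] by linarith
  qed (use assms in simp)
  finally show ?thesis .
qed

lemma nn_integral_shifted_powr_le_supercritical:
  fixes x s :: real
  assumes "1 < s" "0 < x"
  shows "(\<integral>\<^sup>+ b\<in>{0..1}. ennreal ((x + b) powr (- s)) \<partial>lborel) \<le> ennreal (x powr (1 - s) / (s - 1))"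
proof -
  have "(\<integral>\<^sup>+ b\<in>{0..1}. ennreal ((x + b) powr (- s)) \<partial>lborel)
          = ennreal ((x powr (1 - s) - (x + 1) powr (1 - s)) / (s - 1))"
    using has_integral_shifted_powr[of x s] assms
    by (subst minus_divide_divide[symmetric]) (intro nn_integral_has_integral_lebesgue', auto)
  also have "\<dots> \<le> ennreal (x powr (1 - s) / (s - 1))"
    using assms by (intro ennreal_leI divide_right_mono) auto
  finally show ?thesis .
qed

lemma nn_integral_shifted_inverse_le:
  fixes x :: real
  assumes "0 < x" "x \<le> 1"
  shows "(\<integral>\<^sup>+ b\<in>{0..1}. ennreal ((x + b) powr (- 1)) \<partial>lborel) \<le> ennreal (1 - ln x)"
proof -
  have "(\<integral>\<^sup>+ b\<in>{0..1}. ennreal ((x + b) powr (- 1)) \<partial>lborel) = ennreal (ln (x + 1) - ln x)"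
    using has_integral_shifted_inverse[of x] assms by (intro nn_integral_has_integral_lebesgue') auto
  also have "\<dots> \<le> ennreal (1 - ln x)"
    using ln_add_one_self_le_self[of x] assms by (intro ennreal_leI) (simp add: add.commute)
  finally show ?thesis .
qed

lemma inverse_powr_mult_le_split:
  fixes x b p q :: real
  assumes "0 \<le> x" "0 \<le> b" "b \<le> 1" "0 \<le> p" "0 \<le> q"
  shows "1 / ((x + b) powr p * (1 - b) powr q)
           \<le> 2 powr q * (x + b) powr (- p) + 2 powr p * (1 - b) powr (- q)"
proof -
  define P where "P = (x + b) powr (- p)"
  define Q where "Q = (1 - b) powr (- q)"
  have "P \<ge> 0" "Q \<ge> 0" unfolding P_def Q_def by auto
  have lhs: "1 / ((x + b) powr p * (1 - b) powr q) = P * Q"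
    unfolding P_def Q_def by (simp add: powr_minus divide_inverse)
  show ?thesis
  proof (cases "b \<le> 1 / 2")
    case True
    have "Q \<le> (1 / 2) powr (- q)"
      unfolding Q_def using True assms by (intro powr_mono2') auto
    then have "P * Q \<le> 2 powr q * P"
      using \<open>P \<ge> 0\<close> by (simp add: powr_divide powr_minus_divide mult_left_mono mult.commute)
    then show ?thesis
      using \<open>Q \<ge> 0\<close> lhs by (simp add: P_def Q_def add_increasing2)
  next
    case False
    have "P \<le> (1 / 2) powr (- p)"
      unfolding P_def using False assms by (intro powr_mono2') auto
    then have "P * Q \<le> 2 powr p * Q"
      using \<open>Q \<ge> 0\<close> by (simp add: powr_divide powr_minus_divide mult_right_mono)
    then show ?thesis
      using \<open>P \<ge> 0\<close> lhs by (simp add: P_def Q_def add_increasing)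
  qed
qed

lemma nn_integral_kernel_le:
  fixes \<mu> \<alpha> t B :: real
  assumes "0 < \<mu>" "\<mu> < 1" "0 < \<alpha>" "0 \<le> B"
    and shifted: "(\<integral>\<^sup>+ b\<in>{0..1}. ennreal ((exp (- t) + b) powr (- (\<mu> + \<alpha>))) \<partial>lborel) \<le> ennreal B"
  shows "(\<integral>\<^sup>+ b\<in>{0..1}. ennreal (\<mu> * exp ((\<mu> - \<alpha>) * t) /
            ((exp (- t) + b) powr (\<mu> + \<alpha>) * (1 - b) powr (1 - \<mu>))) \<partial>lborel)
         \<le> ennreal (\<mu> * exp ((\<mu> - \<alpha>) * t) * (2 powr (1 - \<mu>) * B + 2 powr (\<mu> + \<alpha>) / \<mu>))"
proof -
  define a1 where "a1 = \<mu> * exp ((\<mu> - \<alpha>) * t) * 2 powr (1 - \<mu>)"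
  define a2 where "a2 = \<mu> * exp ((\<mu> - \<alpha>) * t) * 2 powr (\<mu> + \<alpha>)"
  have a_nonneg: "0 \<le> a1" "0 \<le> a2"
    unfolding a1_def a2_def using assms by auto
  have pointwise: "ennreal (\<mu> * exp ((\<mu> - \<alpha>) * t) / ((exp (- t) + b) powr (\<mu> + \<alpha>) * (1 - b) powr (1 - \<mu>)))
      \<le> ennreal a1 * ennreal ((exp (- t) + b) powr (- (\<mu> + \<alpha>))) + ennreal a2 * ennreal ((1 - b) powr (\<mu> - 1))"
    if "b \<in> {0..1}" for b
  proof -
    have "\<mu> * exp ((\<mu> - \<alpha>) * t) / ((exp (- t) + b) powr (\<mu> + \<alpha>) * (1 - b) powr (1 - \<mu>))
        \<le> a1 * (exp (- t) + b) powr (- (\<mu> + \<alpha>)) + a2 * (1 - b) powr (\<mu> - 1)"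
      using mult_left_mono[OF inverse_powr_mult_le_split[of "exp (- t)" b "\<mu> + \<alpha>" "1 - \<mu>"],
          of "\<mu> * exp ((\<mu> - \<alpha>) * t)"] that assms
      unfolding a1_def a2_def by (simp add: algebra_simps)
    then show ?thesis
      using a_nonneg by (simp add: ennreal_leI flip: ennreal_mult ennreal_plus)
  qed
  have "(\<integral>\<^sup>+ b\<in>{0..1}. ennreal (\<mu> * exp ((\<mu> - \<alpha>) * t) /
            ((exp (- t) + b) powr (\<mu> + \<alpha>) * (1 - b) powr (1 - \<mu>))) \<partial>lborel)
      \<le> (\<integral>\<^sup>+ b\<in>{0..1}. ennreal a1 * ennreal ((exp (- t) + b) powr (- (\<mu> + \<alpha>)))
            + ennreal a2 * ennreal ((1 - b) powr (\<mu> - 1)) \<partial>lborel)"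
    using pointwise by (intro nn_integral_mono) (auto split: split_indicator)
  also have "\<dots> = ennreal a1 * (\<integral>\<^sup>+ b\<in>{0..1}. ennreal ((exp (- t) + b) powr (- (\<mu> + \<alpha>))) \<partial>lborel)
      + ennreal a2 * (\<integral>\<^sup>+ b\<in>{0..1}. ennreal ((1 - b) powr (\<mu> - 1)) \<partial>lborel)"
    by (subst nn_set_integral_add) (auto simp: nn_integral_cmult mult.assoc)
  also have "\<dots> \<le> ennreal a1 * ennreal B + ennreal a2 * ennreal (1 / \<mu>)"
    using shifted has_integral_one_minus_powr[of \<mu>] assms
    by (intro add_mono mult_left_mono) (auto simp: nn_integral_has_integral_lebesgue')
  also have "\<dots> = ennreal (\<mu> * exp ((\<mu> - \<alpha>) * t) * (2 powr (1 - \<mu>) * B + 2 powr (\<mu> + \<alpha>) / \<mu>))"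
    using a_nonneg assms
    by (simp add: a1_def a2_def algebra_simps flip: ennreal_mult ennreal_plus)
  finally show ?thesis .
qed

lemma nn_integral_Icc_eq_interval_integral:
  fixes g :: "real \<Rightarrow> real" and a b :: real
  assumes "a \<le> b" "continuous_on {a..b} g" "\<And>t. t \<in> {a..b} \<Longrightarrow> 0 \<le> g t"
  shows "(\<integral>\<^sup>+ t\<in>{a..b}. ennreal (g t) \<partial>lborel) = ennreal (LBINT t=a..b. g t)"
proof -
  have "set_integrable lborel {a..b} g"
    unfolding set_integrable_def using assms(2) by (intro borel_integrable_compact) auto
  then have lbint: "(LBINT t=a..b. g t) = integral {a..b} g"
    by (rule interval_integral_eq_integral[OF assms(1)])
  have "(g has_integral integral {a..b} g) {a..b}"
    using assms(2) by (intro integrable_integral integrable_continuous_interval)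
  then have "(\<integral>\<^sup>+ t\<in>{a..b}. ennreal (g t) \<partial>lborel) = ennreal (integral {a..b} g)"
    using assms(3) by (rule nn_integral_has_integral_lebesgue'[rotated])
  with lbint show ?thesis by simp
qed

lemma kernel_double_integral_le_weighted:
  fixes \<mu> \<alpha> c :: real and w :: "real \<Rightarrow> real"
  assumes "0 < \<mu>" "\<mu> < 1" "0 < \<alpha>" "0 \<le> c"
    and shifted: "\<And>t. 0 \<le> t \<Longrightarrow>
      (\<integral>\<^sup>+ b\<in>{0..1}. ennreal ((exp (- t) + b) powr (- (\<mu> + \<alpha>))) \<partial>lborel) \<le> ennreal (c * w t)"
    and w_ge: "\<And>t. 0 \<le> t \<Longrightarrow> 1 \<le> w t" and w_cont: "continuous_on {0..} w"
  shows "\<exists>K>0. \<forall>\<tau>\<ge>0.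
    (\<integral>\<^sup>+ b \<in> {0..1}. (\<integral>\<^sup>+ t \<in> {0..\<tau>}.
        ennreal (\<mu> * exp ((\<mu> - \<alpha>) * t) /
          ((exp (- t) + b) powr (\<mu> + \<alpha>) * (1 - b) powr (1 - \<mu>))) \<partial>lborel) \<partial>lborel)
    \<le> ennreal (K * (LBINT t=0..\<tau>. exp ((\<mu> - \<alpha>) * t) * w t))"
proof (intro exI conjI allI impI)
  define K where "K = \<mu> * (2 powr (1 - \<mu>) * c + 2 powr (\<mu> + \<alpha>) / \<mu>)"
  show "0 < K"
    unfolding K_def using assms by (intro mult_pos_pos add_nonneg_pos) auto
  define f where "f b t = ennreal (\<mu> * exp ((\<mu> - \<alpha>) * t) /
          ((exp (- t) + b) powr (\<mu> + \<alpha>) * (1 - b) powr (1 - \<mu>)))" for b t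
  fix \<tau> :: real
  assume "0 \<le> \<tau>"
  have inner: "(\<integral>\<^sup>+ b\<in>{0..1}. f b t \<partial>lborel) \<le> ennreal (K * (exp ((\<mu> - \<alpha>) * t) * w t))"
    if "0 \<le> t" for t
  proof -
    have "(\<integral>\<^sup>+ b\<in>{0..1}. f b t \<partial>lborel)
        \<le> ennreal (\<mu> * exp ((\<mu> - \<alpha>) * t) * (2 powr (1 - \<mu>) * (c * w t) + 2 powr (\<mu> + \<alpha>) / \<mu>))"
      unfolding f_def using assms(4) w_ge[OF that]
      by (intro nn_integral_kernel_le[OF assms(1-3) _ shifted[OF that]]) simp
    also have "\<dots> \<le> ennreal (K * (exp ((\<mu> - \<alpha>) * t) * w t))"
    proof (rule ennreal_leI)
      have "2 powr (\<mu> + \<alpha>) / \<mu> \<le> 2 powr (\<mu> + \<alpha>) / \<mu> * w t"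
        using mult_left_mono[OF w_ge[OF that], of "2 powr (\<mu> + \<alpha>) / \<mu>"] assms by simp
      then show "\<mu> * exp ((\<mu> - \<alpha>) * t) * (2 powr (1 - \<mu>) * (c * w t) + 2 powr (\<mu> + \<alpha>) / \<mu>)
          \<le> K * (exp ((\<mu> - \<alpha>) * t) * w t)"
        using assms w_ge[OF that] unfolding K_def by (simp add: algebra_simps)
    qed
    finally show ?thesis .
  qed
  have "(\<integral>\<^sup>+ b\<in>{0..1}. (\<integral>\<^sup>+ t\<in>{0..\<tau>}. f b t \<partial>lborel) \<partial>lborel)
      = (\<integral>\<^sup>+ b. (\<integral>\<^sup>+ t. f b t * indicator {0..\<tau>} t * indicator {0..1} b \<partial>lborel) \<partial>lborel)"
    unfolding f_def by (subst nn_integral_multc) auto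
  also have "\<dots> = (\<integral>\<^sup>+ t. (\<integral>\<^sup>+ b. f b t * indicator {0..\<tau>} t * indicator {0..1} b \<partial>lborel) \<partial>lborel)"
    unfolding f_def by (intro lborel_pair.Fubini') measurable
  also have "\<dots> = (\<integral>\<^sup>+ t\<in>{0..\<tau>}. (\<integral>\<^sup>+ b\<in>{0..1}. f b t \<partial>lborel) \<partial>lborel)"
    by (intro nn_integral_cong) (auto simp: nn_integral_multc mult.commute mult.left_commute split: split_indicator)
  also have "\<dots> \<le> (\<integral>\<^sup>+ t\<in>{0..\<tau>}. ennreal (K * (exp ((\<mu> - \<alpha>) * t) * w t)) \<partial>lborel)"
    using inner by (intro nn_integral_mono) (auto split: split_indicator)
  also have "\<dots> = ennreal (K * (LBINT t=0..\<tau>. exp ((\<mu> - \<alpha>) * t) * w t))"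
  proof -
    have "continuous_on {0..\<tau>} (\<lambda>t. K * (exp ((\<mu> - \<alpha>) * t) * w t))"
      using continuous_on_subset[OF w_cont] by (intro continuous_intros) auto
    moreover have "0 \<le> K * (exp ((\<mu> - \<alpha>) * t) * w t)" if "t \<in> {0..\<tau>}" for t
      using \<open>0 < K\<close> w_ge[of t] that by simp
    ultimately show ?thesis
      using nn_integral_Icc_eq_interval_integral[OF \<open>0 \<le> \<tau>\<close>] by (simp add: zero_ereal_def)
  qed
  finally show "(\<integral>\<^sup>+ b\<in>{0..1}. (\<integral>\<^sup>+ t\<in>{0..\<tau>}. f b t \<partial>lborel) \<partial>lborel)
      \<le> ennreal (K * (LBINT t=0..\<tau>. exp ((\<mu> - \<alpha>) * t) * w t))" .
qed

theorem lemma9: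
  fixes \<mu> \<alpha> :: real
  assumes "0 < \<mu>" "\<mu> < 1" "0 < \<alpha>"
  shows "\<exists>K>0. \<forall>\<tau>\<ge>0.
    (\<integral>\<^sup>+ b \<in> {0..1}. (\<integral>\<^sup>+ t \<in> {0..\<tau>}.
        ennreal (\<mu> * exp ((\<mu> - \<alpha>) * t) /
          ((exp (- t) + b) powr (\<mu> + \<alpha>) * (1 - b) powr (1 - \<mu>))) \<partial>lborel) \<partial>lborel)
    \<le> ennreal (if \<alpha> < 1 - \<mu> then K * (LBINT t=0..\<tau>. exp ((\<mu> - \<alpha>) * t))
               else if \<alpha> > 1 - \<mu> then K * (LBINT t=0..\<tau>. exp ((2 * \<mu> - 1) * t))
               else K * (LBINT t=0..\<tau>. (1 + t) * exp ((2 * \<mu> - 1) * t)))"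
proof -
  have exp_neg: "0 < exp (- t)" "exp (- t) \<le> 1" if "0 \<le> t" for t :: real
    using that by auto
  consider (sub) "\<alpha> < 1 - \<mu>" | (super) "\<alpha> > 1 - \<mu>" | (crit) "\<alpha> = 1 - \<mu>"
    by linarith
  then show ?thesis
  proof cases
    case sub
    have "(\<integral>\<^sup>+ b\<in>{0..1}. ennreal ((exp (- t) + b) powr (- (\<mu> + \<alpha>))) \<partial>lborel)
        \<le> ennreal (2 powr (1 - (\<mu> + \<alpha>)) / (1 - (\<mu> + \<alpha>)) * 1)" if "0 \<le> t" for t
      using nn_integral_shifted_powr_le_subcritical[of "\<mu> + \<alpha>" "exp (- t)"] exp_neg[OF that] sub assms
      by simp
    from kernel_double_integral_le_weighted[OF assms _ this _ continuous_on_const] sub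
    show ?thesis by simp
  next
    case super
    have "(\<integral>\<^sup>+ b\<in>{0..1}. ennreal ((exp (- t) + b) powr (- (\<mu> + \<alpha>))) \<partial>lborel)
        \<le> ennreal (1 / (\<mu> + \<alpha> - 1) * exp ((\<mu> + \<alpha> - 1) * t))" if "0 \<le> t" for t
      using nn_integral_shifted_powr_le_supercritical[of "\<mu> + \<alpha>" "exp (- t)"] super
      by (simp add: powr_def algebra_simps)
    moreover have "continuous_on {0..} (\<lambda>t. exp ((\<mu> + \<alpha> - 1) * t))"
      by (intro continuous_intros)
    moreover have "exp ((\<mu> - \<alpha>) * t) * exp ((\<mu> + \<alpha> - 1) * t) = exp ((2 * \<mu> - 1) * t)" for t
      by (simp flip: exp_add add: algebra_simps)
    ultimately show ?thesis
      using kernel_double_integral_le_weighted[OF assms,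
          of "1 / (\<mu> + \<alpha> - 1)" "\<lambda>t. exp ((\<mu> + \<alpha> - 1) * t)"] super
      by simp
  next
    case crit
    have "(\<integral>\<^sup>+ b\<in>{0..1}. ennreal ((exp (- t) + b) powr (- (\<mu> + \<alpha>))) \<partial>lborel)
        \<le> ennreal (1 * (1 + t))" if "0 \<le> t" for t
      using nn_integral_shifted_inverse_le[of "exp (- t)"] exp_neg[OF that] crit by simp
    moreover have "continuous_on {0..} (\<lambda>t::real. 1 + t)"
      by (intro continuous_intros)
    ultimately show ?thesis
      using kernel_double_integral_le_weighted[OF assms, of 1] crit by (simp add: mult.commute)
  qed
qed

end
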